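(* Let $G=\{1,\dots,d\}^m$ and let $S\subseteq G$ be the set of groups obtained by sampling groups independently and uniformly at random from $G$. Let $c>0$. If the total number of groups sampled is greater than $2cd(m+1+\ln d)$, then $\mathsf{DAff}(S)=G$ with probability at least $1-\frac1c$.
   Context: For $z\in G$, $\sigma(z)\in\{0,1\}^{md}$ is the concatenation of the one-hot encodings of $z_1,\dots,z_m$. For a finite $\mathcal{A}=\{z^{(1)},\dots,z^{(k)}\}\subseteq G$, $\mathsf{DAff}(\mathcal{A})=\{z\in G:\exists\alpha\in\mathbb{R}^k,\ \sum_i\alpha_i=1,\ \sigma(z)=\sum_i\alpha_i\sigma(z^{(i)})\}$, i.e. the set of points of $G$ whose encodings lie in the (ordinary) affine hull of the encodings of $\mathcal{A}$. *)

theory Defs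
  imports "HOL-Probability.Probability"
begin

text \<open>The grid G = {1,...,d}^m; a point z is a function on indices {0..<m}
  (extensional: undefined outside), with values in {1..d}.\<close>
definition grid :: "nat \<Rightarrow> nat \<Rightarrow> (nat \<Rightarrow> nat) set" where
  "grid d m = PiE {..<m} (\<lambda>_. {1..d})"

definition onehot :: "nat \<Rightarrow> nat \<Rightarrow> (nat \<Rightarrow> nat) \<Rightarrow> nat \<times> nat \<Rightarrow> real" where
  "onehot d m z = (\<lambda>(i, j). if i < m \<and> j \<in> {1..d} \<and> z i = j then 1 else 0)"

definition DAff :: "nat \<Rightarrow> nat \<Rightarrow> (nat \<Rightarrow> nat) set \<Rightarrow> (nat \<Rightarrow> nat) set" where
  "DAff d m A = {z \<in> grid d m. \<exists>\<alpha> :: (nat \<Rightarrow> nat) \<Rightarrow> real.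
      (\<Sum>a\<in>A. \<alpha> a) = 1 \<and>
      (\<forall>i<m. \<forall>j\<in>{1..d}. onehot d m z (i, j) = (\<Sum>a\<in>A. \<alpha> a * onehot d m a (i, j)))}"

definition samples :: "nat \<Rightarrow> nat \<Rightarrow> nat \<Rightarrow> (nat \<Rightarrow> nat \<Rightarrow> nat) pmf" where
  "samples d m n = Pi_pmf {..<n} undefined (\<lambda>_. pmf_of_set (grid d m))"

end

theory Submission
  imports Defs "HOL-Library.Function_Algebras" "HOL-Analysis.Harmonic_Numbers"
begin

text \<open>Encode a point by its one-hot vector together with a constant coordinate 1. Then
  \<open>DAff(A)\<close> consists of the grid points whose encoding lies in the linear span of the
  encodings of \<open>A\<close>, and the dimension \<open>r(A)\<close> of that span is at most \<open>D = m(d - 1) + 1\<close>.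

  The key estimate is that a nonempty set of grid points of rank \<open>r\<close> has at most
  \<open>d^m exp (-(D - r) / d)\<close> elements. It follows by induction on \<open>m\<close>: deleting the last
  coordinate, a fibre of size \<open>k\<close> costs \<open>k - 1\<close> dimensions, and \<open>k \<le> d exp (k / d - 1)\<close>.

  Applied to \<open>DAff(A)\<close>, a uniform sample raises the rank \<open>r < D\<close> of the sampled set with
  probability at least \<open>1 - exp (-(D - r) / d)\<close>. So the expected number of samples until
  \<open>DAff = G\<close> is at most \<open>\<Sum>\<^sub>r 1 / (1 - exp (-(D - r) / d)) \<le> 2 d (m + 1 + ln d)\<close>, a
  coupon-collector bound. As the failure probability after \<open>t\<close> samples is nonincreasing in
  \<open>t\<close>, \<open>n\<close> times the failure probability after \<open>n\<close> samples is at most this expectation,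
  which is less than \<open>n / c\<close>.\<close>

section \<open>Linear algebra\<close>

context vector_space
begin

lemma span_image_finite:
  assumes "finite A"
  shows "span (f ` A) = range (\<lambda>\<alpha>. \<Sum>a\<in>A. scale (\<alpha> a) (f a))"
proof
  show "range (\<lambda>\<alpha>. \<Sum>a\<in>A. scale (\<alpha> a) (f a)) \<subseteq> span (f ` A)"
  proof clarify
    fix \<alpha> show "(\<Sum>a\<in>A. scale (\<alpha> a) (f a)) \<in> span (f ` A)"
      by (intro span_sum span_scale span_base imageI)
  qed
  show "span (f ` A) \<subseteq> range (\<lambda>\<alpha>. \<Sum>a\<in>A. scale (\<alpha> a) (f a))"
  proof
    fix v assume "v \<in> span (f ` A)"
    then show "v \<in> range (\<lambda>\<alpha>. \<Sum>a\<in>A. scale (\<alpha> a) (f a))"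
    proof (induction rule: span_induct_alt)
      case base
      show ?case using rangeI[of "\<lambda>\<alpha>. \<Sum>a\<in>A. scale (\<alpha> a) (f a)" "\<lambda>_. 0"] by simp
    next
      case (step c x y)
      then obtain b \<alpha> where b: "b \<in> A" "x = f b" and y: "y = (\<Sum>a\<in>A. scale (\<alpha> a) (f a))"
        by blast
      have "(\<Sum>a\<in>A. scale (\<alpha> a + (if a = b then c else 0)) (f a)) =
          y + (\<Sum>a\<in>A. scale (if a = b then c else 0) (f a))"
        unfolding y by (simp only: scale_left_distrib sum.distrib)
      also have "(\<Sum>a\<in>A. scale (if a = b then c else 0) (f a)) =
          (\<Sum>a\<in>A. if a = b then scale c (f a) else 0)"
        by (rule sum.cong) simp_all
      also have "\<dots> = scale c x"
        using assms b by simp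
      finally have "scale c x + y = (\<Sum>a\<in>A. scale (\<alpha> a + (if a = b then c else 0)) (f a))"
        by (simp add: add.commute)
      then show ?case
        using rangeI[of "\<lambda>\<alpha>. \<Sum>a\<in>A. scale (\<alpha> a) (f a)" "\<lambda>a. \<alpha> a + (if a = b then c else 0)"]
        by (simp only:)
    qed
  qed
qed

lemma dim_insert_finite:
  assumes "finite S"
  shows "dim (insert x S) = (if x \<in> span S then dim S else Suc (dim S))"
proof (cases "x \<in> span S")
  case True
  then show ?thesis using span_redundant span_eq_dim by metis
next
  case False
  obtain B where B: "B \<subseteq> S" "independent B" "S \<subseteq> span B" "card B = dim S"
    using basis_exists by blast
  have "span B = span S"
    unfolding span_eq using B(1,3) span_superset by blast
  then have xB: "x \<notin> span B" using False by simp
  have "dim (insert x S) = card (insert x B)"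
  proof (rule dim_unique)
    show "insert x B \<subseteq> insert x S" using B(1) by blast
    show "insert x S \<subseteq> span (insert x B)"
      using B(3) span_mono[of B "insert x B"] span_superset[of "insert x B"] by blast
    show "independent (insert x B)" using independent_insertI[OF xB B(2)] .
  qed rule
  also have "\<dots> = Suc (dim S)"
    using xB span_superset[of B] finite_subset[OF B(1) assms] B(4) by (subst card_insert_disjoint) auto
  finally show ?thesis using False by (simp only: if_False)
qed

lemma dim_mono_finite:
  assumes "V \<subseteq> span W" "finite W"
  shows "dim V \<le> dim W"
proof -
  obtain B where B: "B \<subseteq> W" "independent B" "W \<subseteq> span B" "card B = dim W"
    using basis_exists by blast
  have "V \<subseteq> span B"
    using assms(1) span_minimal[OF B(3) subspace_span] by blast
  then have "dim V \<le> card B"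
    using dim_le_card finite_subset[OF B(1) assms(2)] by blast
  then show ?thesis using B(4) by simp
qed

lemma independent_Un_kernel:
  assumes "Vector_Spaces.linear scale scale f" "independent E" "f ` E \<subseteq> {0}"
    and "independent (f ` C)" "inj_on f C" "finite E" "finite C"
  shows "independent (E \<union> C)" and "E \<inter> C = {}"
proof -
  interpret f: Vector_Spaces.linear scale scale f by fact
  show disj: "E \<inter> C = {}"
  proof (rule ccontr)
    assume "E \<inter> C \<noteq> {}"
    then obtain v where v: "v \<in> E" "v \<in> C" by blast
    then have "f v = 0" using assms(3) by blast
    then have "0 \<in> f ` C" using v(2) by (metis imageI)
    then show False using assms(4) dependent_zero by blast
  qed
  show "independent (E \<union> C)"
    unfolding dependent_finite[OF finite_UnI[OF assms(6,7)]]
  proof clarify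
    fix u v assume u: "(\<Sum>v\<in>E \<union> C. scale (u v) v) = 0" and v: "v \<in> E \<union> C" "u v \<noteq> 0"
    have split: "(\<Sum>v\<in>E \<union> C. scale (u v) v) = (\<Sum>v\<in>E. scale (u v) v) + (\<Sum>v\<in>C. scale (u v) v)"
      by (rule sum.union_disjoint[OF assms(6,7) disj])
    define g where "g w = u (the_inv_into C f w)" for w
    have "0 = f (\<Sum>v\<in>E \<union> C. scale (u v) v)"
      using u by simp
    also have "\<dots> = (\<Sum>v\<in>E. scale (u v) (f v)) + (\<Sum>v\<in>C. scale (u v) (f v))"
      unfolding split f.add f.sum f.scale ..
    also have "(\<Sum>v\<in>E. scale (u v) (f v)) = 0"
      using assms(3) by (intro sum.neutral) auto
    also have "(\<Sum>v\<in>C. scale (u v) (f v)) = (\<Sum>w\<in>f ` C. scale (g w) w)"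
      unfolding sum.reindex[OF assms(5)] g_def using assms(5) by (simp add: the_inv_into_f_f)
    finally have "(\<Sum>w\<in>f ` C. scale (g w) w) = 0" by simp
    then have "g (f v) = 0" if "v \<in> C" for v
      using independentD[OF assms(4) finite_imageI[OF assms(7)] subset_refl] that by blast
    then have uC: "u v = 0" if "v \<in> C" for v
      using that assms(5) by (simp add: g_def the_inv_into_f_f)
    then have "(\<Sum>v\<in>E. scale (u v) v) = 0"
      using u split by simp
    then have "u v = 0" if "v \<in> E" for v
      using independentD[OF assms(2,6) subset_refl] that by blast
    with uC v show False by blast
  qed
qed

end

section \<open>Encodings and affine rank\<close>

lemma finite_grid: "finite (grid d m)"
  unfolding grid_def by (rule finite_PiE) auto

lemma grid_nonempty: "d \<ge> 1 \<Longrightarrow> grid d m \<noteq> {}"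
  unfolding grid_def by (simp add: PiE_eq_empty_iff)

lemma card_grid: "card (grid d m) = d ^ m"
  unfolding grid_def by (simp add: card_PiE)

lemma grid_coord: "z \<in> grid d m \<Longrightarrow> i < m \<Longrightarrow> z i \<in> {1..d}"
  unfolding grid_def using PiE_mem[of z "{..<m}" "\<lambda>_. {1..d}" i] by simp

lemma grid_undefined: "z \<in> grid d m \<Longrightarrow> \<not> i < m \<Longrightarrow> z i = undefined"
  unfolding grid_def using PiE_arb[of z "{..<m}" "\<lambda>_. {1..d}" i] by simp

type_synonym vec = "(nat \<times> nat) option \<Rightarrow> real"

definition vscale :: "real \<Rightarrow> vec \<Rightarrow> vec" where
  "vscale c v = (\<lambda>x. c * v x)"

text \<open>Not a simp rule: the simplifier would then unfold \<^const>\<open>vscale\<close> inside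
  \<open>V.span\<close> and \<open>V.dim\<close>.\<close>
lemma vscale_apply: "vscale c v x = c * v x"
  by (simp add: vscale_def)

interpretation V: vector_space vscale
  by unfold_locales (auto simp: vscale_def fun_eq_iff algebra_simps)

lemma sum_vec_apply: "(\<Sum>a\<in>A. (f a :: vec)) x = (\<Sum>a\<in>A. f a x)"
  by (induction A rule: infinite_finite_induct) auto

text \<open>The coordinate \<^term>\<open>None\<close> is constantly 1, so a linear combination of encodings
  that reproduces it is an affine combination.\<close>
definition encode :: "nat \<Rightarrow> nat \<Rightarrow> (nat \<Rightarrow> nat) \<Rightarrow> vec" where
  "encode d m z = (\<lambda>x. case x of None \<Rightarrow> 1 | Some p \<Rightarrow> onehot d m z p)"

lemma encode_None [simp]: "encode d m z None = 1"
  and encode_Some [simp]: "encode d m z (Some p) = onehot d m z p"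
  by (simp_all add: encode_def)

definition affine_rank :: "nat \<Rightarrow> nat \<Rightarrow> (nat \<Rightarrow> nat) set \<Rightarrow> nat" where
  "affine_rank d m A = V.dim (encode d m ` A)"

lemma encode_eq_combination_iff:
  "encode d m z = (\<Sum>a\<in>A. vscale (\<alpha> a) (encode d m a)) \<longleftrightarrow>
    (\<Sum>a\<in>A. \<alpha> a) = 1 \<and>
    (\<forall>i<m. \<forall>j\<in>{1..d}. onehot d m z (i, j) = (\<Sum>a\<in>A. \<alpha> a * onehot d m a (i, j)))"
proof -
  have "encode d m z = (\<Sum>a\<in>A. vscale (\<alpha> a) (encode d m a)) \<longleftrightarrow>
      1 = (\<Sum>a\<in>A. \<alpha> a) \<and> (\<forall>p. onehot d m z p = (\<Sum>a\<in>A. \<alpha> a * onehot d m a p))"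
    by (simp add: fun_eq_iff sum_vec_apply vscale_apply split_option_all)
  also have "(\<forall>p. onehot d m z p = (\<Sum>a\<in>A. \<alpha> a * onehot d m a p)) \<longleftrightarrow>
      (\<forall>i<m. \<forall>j\<in>{1..d}. onehot d m z (i, j) = (\<Sum>a\<in>A. \<alpha> a * onehot d m a (i, j)))"
    (is "?all \<longleftrightarrow> ?grid")
  proof
    show ?grid if ?all using that by blast
    show ?all if ?grid
    proof
      fix p :: "nat \<times> nat"
      obtain i j where p: "p = (i, j)" by fastforce
      show "onehot d m z p = (\<Sum>a\<in>A. \<alpha> a * onehot d m a p)"
      proof (cases "i < m \<and> j \<in> {1..d}")
        case True
        with \<open>?grid\<close> show ?thesis unfolding p by blast
      next
        case False
        then have "onehot d m a (i, j) = 0" for a by (auto simp: onehot_def)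
        then show ?thesis unfolding p by simp
      qed
    qed
  qed
  finally show ?thesis by auto
qed

lemma DAff_iff_encode_in_span:
  assumes "finite A"
  shows "z \<in> DAff d m A \<longleftrightarrow> z \<in> grid d m \<and> encode d m z \<in> V.span (encode d m ` A)"
  unfolding V.span_image_finite[OF assms] DAff_def encode_eq_combination_iff[symmetric]
  by (simp add: image_iff)

lemma DAff_subset_grid: "DAff d m A \<subseteq> grid d m"
  unfolding DAff_def by blast

lemma DAff_mono:
  assumes "A \<subseteq> B" "finite B"
  shows "DAff d m A \<subseteq> DAff d m B"
proof
  fix z assume "z \<in> DAff d m A"
  then have "z \<in> grid d m" "encode d m z \<in> V.span (encode d m ` A)"
    using DAff_iff_encode_in_span[OF finite_subset[OF assms]] by auto
  moreover have "V.span (encode d m ` A) \<subseteq> V.span (encode d m ` B)"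
    by (intro V.span_mono image_mono assms(1))
  ultimately show "z \<in> DAff d m B"
    using DAff_iff_encode_in_span[OF assms(2)] by blast
qed

lemma DAff_eq_grid_mono:
  assumes "DAff d m A = grid d m" "A \<subseteq> B" "finite B"
  shows "DAff d m B = grid d m"
  using DAff_mono[OF assms(2,3)] DAff_subset_grid[of d m B] assms(1) by blast

lemma affine_rank_insert:
  assumes "finite A" "z \<in> grid d m"
  shows "affine_rank d m (insert z A) =
    (if z \<in> DAff d m A then affine_rank d m A else Suc (affine_rank d m A))"
  unfolding affine_rank_def image_insert
  using V.dim_insert_finite[OF finite_imageI[OF assms(1)], of "encode d m z"]
    DAff_iff_encode_in_span[OF assms(1), of z] assms(2)
  by simp

lemma affine_rank_DAff_le:
  assumes "finite A"
  shows "affine_rank d m (DAff d m A) \<le> affine_rank d m A"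
  unfolding affine_rank_def
  by (rule V.dim_mono_finite) (use DAff_iff_encode_in_span[OF assms] assms in auto)

lemma affine_rank_pos:
  assumes "finite A" "A \<noteq> {}"
  shows "affine_rank d m A > 0"
proof -
  obtain a where "a \<in> A" using assms(2) by blast
  have "encode d m a \<noteq> 0"
  proof
    assume "encode d m a = 0"
    then have "encode d m a None = 0" by simp
    then show False by simp
  qed
  then have "1 = V.dim {encode d m a}"
    by (simp add: V.dim_eq_card_independent)
  also have "\<dots> \<le> affine_rank d m A"
    unfolding affine_rank_def
    by (rule V.dim_mono_finite) (use \<open>a \<in> A\<close> assms(1) in \<open>auto intro: V.span_base\<close>)
  finally show ?thesis by simp
qed


definition max_rank :: "nat \<Rightarrow> nat \<Rightarrow> nat" where
  "max_rank d m = m * (d - 1) + 1"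

definition base_point :: "nat \<Rightarrow> nat \<Rightarrow> nat" where
  "base_point m = (\<lambda>i. if i < m then 1 else undefined)"

definition spanning_points :: "nat \<Rightarrow> nat \<Rightarrow> (nat \<Rightarrow> nat) set" where
  "spanning_points d m =
    insert (base_point m) ((\<lambda>(i, j). (base_point m)(i := j)) ` ({..<m} \<times> {2..d}))"

lemma finite_spanning_points: "finite (spanning_points d m)"
  by (simp add: spanning_points_def)

lemma card_spanning_points: "card (spanning_points d m) \<le> max_rank d m"
proof -
  let ?N = "(\<lambda>(i, j). (base_point m)(i := j)) ` ({..<m} \<times> {2..d})"
  have "card ?N \<le> card ({..<m} \<times> {2..d})"
    by (rule card_image_le) simp
  then have "card ?N \<le> m * (d - 1)"
    by (simp add: card_cartesian_product)
  moreover have "card (spanning_points d m) \<le> Suc (card ?N)"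
    unfolding spanning_points_def by (simp add: card_insert_if)
  ultimately show ?thesis
    by (simp add: max_rank_def)
qed

lemma base_point_update_mem:
  assumes "k < m" "j \<in> {1..d}"
  shows "(base_point m)(k := j) \<in> spanning_points d m"
proof (cases "j = 1")
  case True
  then have "(base_point m)(k := j) = base_point m"
    using assms(1) by (auto simp: base_point_def)
  then show ?thesis by (simp add: spanning_points_def)
next
  case False
  then have "(k, j) \<in> {..<m} \<times> {2..d}"
    using assms by auto
  then show ?thesis
    unfolding spanning_points_def by (intro insertI2 image_eqI[where x = "(k, j)"]) simp_all
qed

lemma encode_update_diff:
  assumes "z k = y k"
  shows "encode d m (z(k := a)) - encode d m z = encode d m (y(k := a)) - encode d m y"
proof
  fix x show "(encode d m (z(k := a)) - encode d m z) x = (encode d m (y(k := a)) - encode d m y) x"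
    using assms by (cases x) (auto simp: onehot_def)
qed

text \<open>Change the coordinates of the base point one at a time; each step adds the difference
  of the encodings of two spanning points.\<close>
lemma encode_in_span_spanning_points:
  assumes z: "z \<in> grid d m"
  shows "encode d m z \<in> V.span (encode d m ` spanning_points d m)"
proof -
  define w where "w k = (\<lambda>i. if i < k then z i else base_point m i)" for k
  have "encode d m (w k) \<in> V.span (encode d m ` spanning_points d m)" if "k \<le> m" for k
    using that
  proof (induction k)
    case 0
    have "w 0 = base_point m" by (simp add: w_def)
    then show ?case
      by (auto simp: spanning_points_def intro: V.span_base)
  next
    case (Suc k)
    let ?S = "V.span (encode d m ` spanning_points d m)"
    have "(base_point m)(k := z k) \<in> spanning_points d m"
      using grid_coord[OF z, of k] Suc.prems by (intro base_point_update_mem) auto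
    then have "encode d m ((base_point m)(k := z k)) \<in> ?S"
      by (intro V.span_base imageI)
    moreover have "encode d m (base_point m) \<in> ?S"
      by (intro V.span_base imageI) (simp add: spanning_points_def)
    moreover have "encode d m (w k) \<in> ?S"
      using Suc by simp
    moreover have "w (Suc k) = (w k)(k := z k)" "w k k = base_point m k"
      by (auto simp: w_def)
    then have "encode d m (w (Suc k)) =
        encode d m (w k) + (encode d m ((base_point m)(k := z k)) - encode d m (base_point m))"
      using encode_update_diff[of "w k" k "base_point m" d m "z k"] by (simp add: diff_eq_eq add.commute)
    ultimately show ?case
      by (simp only:) (intro V.span_add V.span_diff)
  qed
  moreover have "w m = z"
    using grid_undefined[OF z] by (auto simp: w_def base_point_def fun_eq_iff)
  ultimately show ?thesis by auto
qed

lemma affine_rank_le_max_rank: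
  assumes "A \<subseteq> grid d m"
  shows "affine_rank d m A \<le> max_rank d m"
proof -
  have "encode d m ` A \<subseteq> V.span (encode d m ` spanning_points d m)"
    using assms encode_in_span_spanning_points by blast
  then have "affine_rank d m A \<le> card (encode d m ` spanning_points d m)"
    unfolding affine_rank_def by (intro V.dim_le_card finite_imageI finite_spanning_points)
  also have "\<dots> \<le> card (spanning_points d m)"
    by (intro card_image_le finite_spanning_points)
  also have "\<dots> \<le> max_rank d m"
    by (rule card_spanning_points)
  finally show ?thesis .
qed

section \<open>Counting grid points of bounded rank\<close>

definition drop_last :: "nat \<Rightarrow> (nat \<Rightarrow> nat) \<Rightarrow> nat \<Rightarrow> nat" where
  "drop_last m z = z(m := undefined)"

lemma drop_last_grid:
  assumes z: "z \<in> grid d (Suc m)"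
  shows "drop_last m z \<in> grid d m"
  unfolding grid_def PiE_iff
proof
  show "\<forall>i\<in>{..<m}. drop_last m z i \<in> {1..d}"
    using grid_coord[OF z] by (simp add: drop_last_def)
  show "drop_last m z \<in> extensional {..<m}"
    using grid_undefined[OF z] by (simp add: drop_last_def extensional_def)
qed

definition drop_coord :: "nat \<Rightarrow> vec \<Rightarrow> vec" where
  "drop_coord m v = (\<lambda>x. case x of Some (i, j) \<Rightarrow> if i = m then 0 else v x | None \<Rightarrow> v x)"

lemma linear_drop_coord: "Vector_Spaces.linear vscale vscale (drop_coord m)"
  unfolding Vector_Spaces.linear_iff
proof (intro conjI allI V.vector_space_axioms)
  show "drop_coord m (v + w) = drop_coord m v + drop_coord m w" for v w
    by (simp add: drop_coord_def fun_eq_iff split: option.split)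
  show "drop_coord m (vscale c v) = vscale c (drop_coord m v)" for c v
    by (simp add: drop_coord_def vscale_def fun_eq_iff split: option.split)
qed

lemma drop_coord_encode: "drop_coord m (encode d (Suc m) z) = encode d m (drop_last m z)"
proof
  fix x show "drop_coord m (encode d (Suc m) z) x = encode d m (drop_last m z) x"
  proof (cases x)
    case (Some p)
    obtain i j where "p = (i, j)" by fastforce
    with Some show ?thesis
      by (cases "i = m") (simp_all add: drop_coord_def drop_last_def onehot_def less_Suc_eq)
  qed (simp add: drop_coord_def)
qed

lemma independent_of_unit_coordinates:
  fixes v :: "'a \<Rightarrow> vec"
  assumes "finite I" and unit: "\<And>i j. i \<in> I \<Longrightarrow> j \<in> I \<Longrightarrow> v i (x j) = (if i = j then 1 else 0)"
  shows "inj_on v I" and "V.independent (v ` I)"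
proof -
  show inj: "inj_on v I"
  proof (rule inj_onI)
    fix i j assume ij: "i \<in> I" "j \<in> I" "v i = v j"
    have "(1::real) = v i (x i)"
      using unit[OF ij(1) ij(1)] by simp
    also have "\<dots> = v j (x i)"
      by (simp only: ij(3))
    also have "\<dots> = (if j = i then 1 else 0)"
      by (rule unit[OF ij(2) ij(1)])
    finally show "i = j"
      by (simp split: if_splits)
  qed
  show "V.independent (v ` I)"
    unfolding V.dependent_finite[OF finite_imageI[OF assms(1)]]
  proof clarify
    fix u i assume sum0: "(\<Sum>w\<in>v ` I. vscale (u w) w) = 0" and i: "i \<in> I" "u (v i) \<noteq> 0"
    have "0 = (\<Sum>w\<in>v ` I. vscale (u w) w) (x i)"
      using sum0 by simp
    also have "\<dots> = (\<Sum>j\<in>I. u (v j) * v j (x i))"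
      by (simp add: sum_vec_apply vscale_apply sum.reindex[OF inj])
    also have "\<dots> = (\<Sum>j\<in>I. if j = i then u (v i) else 0)"
      by (rule sum.cong) (simp_all add: unit i(1))
    also have "\<dots> = u (v i)"
      using i(1) assms(1) by simp
    finally show False using i(2) by simp
  qed
qed

lemma drop_last_eq_imp_eq_iff:
  assumes "drop_last m z = drop_last m z'"
  shows "z = z' \<longleftrightarrow> z m = z' m"
proof
  assume "z m = z' m"
  show "z = z'"
  proof
    fix i show "z i = z' i"
      using \<open>z m = z' m\<close> fun_cong[OF assms[unfolded drop_last_def], of i] by (cases "i = m") simp_all
  qed
qed simp

lemma independent_fibre_differences:
  assumes F: "F \<subseteq> grid d (Suc m)" "finite F" "z1 \<in> F"
    and fibre: "\<And>z. z \<in> F \<Longrightarrow> drop_last m z = y"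
  shows "V.independent ((\<lambda>z. encode d (Suc m) z - encode d (Suc m) z1) ` (F - {z1}))"
    and "card ((\<lambda>z. encode d (Suc m) z - encode d (Suc m) z1) ` (F - {z1})) = card F - 1"
proof -
  have same: "z = z' \<longleftrightarrow> z m = z' m" if "z \<in> F" "z' \<in> F" for z z'
    by (rule drop_last_eq_imp_eq_iff) (simp add: fibre that)
  have unit: "(encode d (Suc m) z - encode d (Suc m) z1) (Some (m, z' m)) = (if z = z' then 1 else 0)"
    if "z \<in> F - {z1}" "z' \<in> F - {z1}" for z z'
    using that grid_coord[of z' d "Suc m" m] F(1,3) same[of z z'] same[of z1 z']
    by (auto simp: onehot_def)
  note indep = independent_of_unit_coordinates[where I = "F - {z1}"
      and v = "\<lambda>z. encode d (Suc m) z - encode d (Suc m) z1" and x = "\<lambda>z. Some (m, z m)", OF _ unit]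
  show "V.independent ((\<lambda>z. encode d (Suc m) z - encode d (Suc m) z1) ` (F - {z1}))"
    using indep(2) F(2) by simp
  show "card ((\<lambda>z. encode d (Suc m) z - encode d (Suc m) z1) ` (F - {z1})) = card F - 1"
    using card_image[OF indep(1)] F(2,3) by simp
qed

lemma lift_basis_drop_last:
  assumes "finite P"
  obtains C where "C \<subseteq> encode d (Suc m) ` P" "inj_on (drop_coord m) C"
    "V.independent (drop_coord m ` C)" "card C = affine_rank d m (drop_last m ` P)"
proof -
  obtain C0 where C0: "C0 \<subseteq> encode d m ` drop_last m ` P" "V.independent C0"
    "card C0 = affine_rank d m (drop_last m ` P)"
    unfolding affine_rank_def by (rule V.basis_exists)
  have "\<forall>c\<in>C0. \<exists>z. z \<in> P \<and> encode d m (drop_last m z) = c"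
    using C0(1) by blast
  from bchoice[OF this] obtain s where s: "\<forall>c\<in>C0. s c \<in> P \<and> encode d m (drop_last m (s c)) = c"
    by blast
  define C where "C = (\<lambda>c. encode d (Suc m) (s c)) ` C0"
  have drop_s: "drop_coord m (encode d (Suc m) (s c)) = c" if "c \<in> C0" for c
    using s that by (simp add: drop_coord_encode)
  have "drop_coord m ` C = (\<lambda>c. c) ` C0"
    unfolding C_def image_image by (rule image_cong) (simp_all add: drop_s)
  then have drop_C: "drop_coord m ` C = C0" by simp
  have inj_C: "inj_on (drop_coord m) C"
  proof (rule inj_onI)
    fix v w assume "v \<in> C" "w \<in> C" "drop_coord m v = drop_coord m w"
    then show "v = w" unfolding C_def using drop_s by auto
  qed
  show thesis
  proof (rule that)
    show "C \<subseteq> encode d (Suc m) ` P"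
      using s by (auto simp: C_def)
    show "card C = affine_rank d m (drop_last m ` P)"
      using card_image[OF inj_C] drop_C C0(3) by simp
  qed (use inj_C drop_C C0(2) in simp_all)
qed

text \<open>The differences inside a fibre lie in the kernel of \<^const>\<open>drop_coord\<close>, while lifts of a
  basis of the projected encodings stay independent modulo that kernel.\<close>
lemma affine_rank_fibre:
  assumes P: "P \<subseteq> grid d (Suc m)" and y: "y \<in> drop_last m ` P"
  shows "affine_rank d m (drop_last m ` P) + card {z\<in>P. drop_last m z = y}
    \<le> affine_rank d (Suc m) P + 1"
proof -
  define F where "F = {z\<in>P. drop_last m z = y}"
  have "finite P" using P finite_grid finite_subset by blast
  then have "finite F" by (simp add: F_def)
  have F_grid: "F \<subseteq> grid d (Suc m)" and fibre: "\<And>z. z \<in> F \<Longrightarrow> drop_last m z = y"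
    using P by (auto simp: F_def)
  obtain z1 where z1: "z1 \<in> F" using y by (auto simp: F_def)
  obtain C where C: "C \<subseteq> encode d (Suc m) ` P" "inj_on (drop_coord m) C"
    "V.independent (drop_coord m ` C)" "card C = affine_rank d m (drop_last m ` P)"
    using lift_basis_drop_last[OF \<open>finite P\<close>] .
  define E where "E = (\<lambda>z. encode d (Suc m) z - encode d (Suc m) z1) ` (F - {z1})"
  note E = independent_fibre_differences[OF F_grid \<open>finite F\<close> z1 fibre, folded E_def]
  interpret drop: Vector_Spaces.linear vscale vscale "drop_coord m"
    by (rule linear_drop_coord)
  have "drop_coord m (encode d (Suc m) z - encode d (Suc m) z1) = 0" if "z \<in> F" for z
    using that z1 fibre by (simp add: drop.diff drop_coord_encode)
  then have drop_E: "drop_coord m ` E \<subseteq> {0}"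
    unfolding E_def by blast
  have fin: "finite E" "finite C"
    using \<open>finite F\<close> finite_subset[OF C(1)] \<open>finite P\<close> by (simp_all add: E_def)
  have indep: "V.independent (E \<union> C)" and disj: "E \<inter> C = {}"
    using V.independent_Un_kernel[OF linear_drop_coord E(1) drop_E C(3,2) fin] by simp_all
  have "E \<subseteq> V.span (encode d (Suc m) ` P)"
  proof
    fix v assume "v \<in> E"
    then obtain z where "z \<in> F" "v = encode d (Suc m) z - encode d (Suc m) z1"
      by (auto simp: E_def)
    then show "v \<in> V.span (encode d (Suc m) ` P)"
      using z1 by (simp only:) (intro V.span_diff V.span_base imageI; simp add: F_def)
  qed
  then have span: "E \<union> C \<subseteq> V.span (encode d (Suc m) ` P)"
    using C(1) V.span_superset by blast
  have "card E + card C = V.dim (E \<union> C)"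
    using card_Un_disjoint[OF fin disj] indep by (simp add: V.dim_eq_card_independent)
  also have "\<dots> \<le> affine_rank d (Suc m) P"
    unfolding affine_rank_def by (rule V.dim_mono_finite[OF span finite_imageI[OF \<open>finite P\<close>]])
  finally have "card E + card C \<le> affine_rank d (Suc m) P" .
  moreover have "card F > 0"
    using z1 \<open>finite F\<close> by (auto simp: card_gt_0_iff)
  ultimately show ?thesis
    using C(4) E(2) unfolding F_def by linarith
qed

lemma mult_pow_exp_le:
  fixes k a c :: real
  assumes "c > 0"
  shows "k * (c ^ m * exp (- a / c)) \<le> c ^ Suc m * exp (- (a + c - k) / c)"
proof -
  have "k / c \<le> exp (k / c - 1)"
    using exp_ge_add_one_self[of "k / c - 1"] by simp
  then have "k \<le> c * exp (k / c - 1)"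
    using assms by (simp add: divide_le_eq mult.commute)
  then have "k * (c ^ m * exp (- a / c)) \<le> c * exp (k / c - 1) * (c ^ m * exp (- a / c))"
    using assms by (intro mult_right_mono) simp_all
  also have "k / c - 1 + - a / c = - (a + c - k) / c"
    using assms by (simp add: field_simps)
  then have "c * exp (k / c - 1) * (c ^ m * exp (- a / c)) = c ^ Suc m * exp (- (a + c - k) / c)"
    by (simp add: exp_add[symmetric])
  finally show ?thesis .
qed

lemma card_le_exp_affine_rank:
  assumes "d \<ge> 1" "P \<subseteq> grid d m" "P \<noteq> {}"
  shows "real (card P)
    \<le> real d ^ m * exp (- (real (max_rank d m) - real (affine_rank d m P)) / real d)"
  using assms(2,3)
proof (induction m arbitrary: P)
  case 0
  have "finite P" using "0.prems"(1) finite_grid finite_subset by blast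
  have "card P \<le> card (grid d 0)"
    using "0.prems"(1) finite_grid by (rule card_mono[rotated])
  then have "real (card P) \<le> 1"
    by (simp add: card_grid)
  also have "1 \<le> exp (- (real (max_rank d 0) - real (affine_rank d 0 P)) / real d)"
    using affine_rank_pos[OF \<open>finite P\<close> "0.prems"(2), where d = d and m = 0]
    by (auto simp: max_rank_def intro!: divide_nonneg_nonneg)
  finally show ?case by simp
next
  case (Suc m)
  define Q where "Q = drop_last m ` P"
  define a where "a = real (max_rank d m) - real (affine_rank d m Q)"
  define k where "k = real (affine_rank d (Suc m) P) + 1 - real (affine_rank d m Q)"
  have "finite P" using Suc.prems(1) finite_grid finite_subset by blast
  have Q: "Q \<subseteq> grid d m" "Q \<noteq> {}" "finite Q"
    using Suc.prems drop_last_grid \<open>finite P\<close> by (auto simp: Q_def)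
  have fibre_le: "real (card {z\<in>P. drop_last m z = y}) \<le> k" if "y \<in> Q" for y
    using affine_rank_fibre[OF Suc.prems(1)] that unfolding k_def Q_def by fastforce
  have "k \<ge> 0"
    using fibre_le Q(2) by (meson ex_in_conv of_nat_0_le_iff order_trans)
  have "max_rank d (Suc m) = max_rank d m + (d - 1)"
    by (simp add: max_rank_def)
  then have exponent: "a + real d - k = real (max_rank d (Suc m)) - real (affine_rank d (Suc m) P)"
    using assms(1) by (simp add: a_def k_def of_nat_diff)
  have "real (card P) = (\<Sum>y\<in>Q. real (card {z\<in>P. drop_last m z = y}))"
    using sum.group[OF \<open>finite P\<close> \<open>finite Q\<close>, of "drop_last m" "\<lambda>_. 1 :: real"]
    by (simp add: Q_def)
  also have "\<dots> \<le> k * real (card Q)"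
    using sum_mono[of Q _ "\<lambda>_. k"] fibre_le by (simp add: mult.commute)
  also have "\<dots> \<le> k * (real d ^ m * exp (- a / real d))"
    using Suc.IH[OF Q(1,2)] \<open>k \<ge> 0\<close> unfolding a_def by (rule mult_left_mono)
  also have "\<dots> \<le> real d ^ Suc m * exp (- (a + real d - k) / real d)"
    by (rule mult_pow_exp_le) (use assms(1) in simp)
  finally show ?case
    unfolding exponent .
qed

section \<open>Sampling\<close>

lemma samples_Suc:
  "samples d m (Suc t) =
    bind_pmf (pmf_of_set (grid d m)) (\<lambda>y. map_pmf (\<lambda>f. f(t := y)) (samples d m t))"
  unfolding samples_def lessThan_Suc
  by (subst Pi_pmf_insert') (auto simp: map_pmf_def)

lemma prob_samples_Suc:
  assumes "d \<ge> 1"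
  shows "measure_pmf.prob (samples d m (Suc t)) {f. Q (A \<union> f ` {..<Suc t})} =
    (\<Sum>y\<in>grid d m. measure_pmf.prob (samples d m t) {f. Q (insert y A \<union> f ` {..<t})})
      / real (card (grid d m))"
proof -
  define G where "G = grid d m"
  define p where "p y = measure_pmf.prob (samples d m t) {f. Q (insert y A \<union> f ` {..<t})}" for y
  have fin: "finite G" and ne: "G \<noteq> {}"
    unfolding G_def using finite_grid grid_nonempty assms by auto
  have "A \<union> (f(t := y)) ` {..<Suc t} = insert y A \<union> f ` {..<t}" for f :: "nat \<Rightarrow> nat \<Rightarrow> nat" and y
    by (auto simp: lessThan_Suc)
  then have pre: "(\<lambda>f. f(t := y)) -` {f. Q (A \<union> f ` {..<Suc t})} = {f. Q (insert y A \<union> f ` {..<t})}" for y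
    by auto
  have "emeasure (samples d m (Suc t)) {f. Q (A \<union> f ` {..<Suc t})}
      = (\<Sum>y\<in>G. emeasure (samples d m t) {f. Q (insert y A \<union> f ` {..<t})}) / of_nat (card G)"
    unfolding samples_Suc G_def[symmetric] emeasure_bind_pmf emeasure_map_pmf pre
      nn_integral_pmf_of_set[OF ne fin] ..
  also have "\<dots> = (\<Sum>y\<in>G. ennreal (p y)) / of_nat (card G)"
    by (simp add: p_def measure_pmf.emeasure_eq_measure)
  also have "\<dots> = ennreal ((\<Sum>y\<in>G. p y) / card G)"
    using fin ne sum_nonneg[of G p] by (simp add: p_def sum_ennreal ennreal_of_nat_eq_real_of_nat divide_ennreal card_gt_0_iff)
  finally show ?thesis
    unfolding G_def p_def measure_pmf.emeasure_eq_measure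
    by (subst (asm) ennreal_inj) (auto intro!: divide_nonneg_nonneg sum_nonneg)
qed

definition fail_prob :: "nat \<Rightarrow> nat \<Rightarrow> nat \<Rightarrow> (nat \<Rightarrow> nat) set \<Rightarrow> real" where
  "fail_prob d m t A =
    measure_pmf.prob (samples d m t) {f. DAff d m (A \<union> f ` {..<t}) \<noteq> grid d m}"

lemma fail_prob_0: "fail_prob d m 0 A = (if DAff d m A = grid d m then 0 else 1)"
  unfolding fail_prob_def samples_def by (simp add: indicator_def)

lemma fail_prob_Suc:
  assumes "d \<ge> 1"
  shows "fail_prob d m (Suc t) A =
    (\<Sum>y\<in>grid d m. fail_prob d m t (insert y A)) / real (card (grid d m))"
  unfolding fail_prob_def by (rule prob_samples_Suc[OF assms])

lemma fail_prob_eq_0: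
  assumes "finite A" "DAff d m A = grid d m"
  shows "fail_prob d m t A = 0"
proof -
  have "DAff d m (A \<union> f ` {..<t}) = grid d m" for f :: "nat \<Rightarrow> nat \<Rightarrow> nat"
    by (rule DAff_eq_grid_mono[OF assms(2)]) (use assms(1) in auto)
  then show ?thesis
    unfolding fail_prob_def by simp
qed

lemma fail_prob_insert_le:
  assumes "finite A"
  shows "fail_prob d m t (insert y A) \<le> fail_prob d m t A"
  unfolding fail_prob_def
proof (rule measure_pmf.finite_measure_mono)
  have "DAff d m (insert y A \<union> f ` {..<t}) = grid d m"
    if "DAff d m (A \<union> f ` {..<t}) = grid d m" for f :: "nat \<Rightarrow> nat \<Rightarrow> nat"
    by (rule DAff_eq_grid_mono[OF that]) (use assms in auto)
  then show "{f. DAff d m (insert y A \<union> f ` {..<t}) \<noteq> grid d m}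
      \<subseteq> {f. DAff d m (A \<union> f ` {..<t}) \<noteq> grid d m}"
    by blast
qed simp

lemma fail_prob_Suc_le:
  assumes "d \<ge> 1" "finite A"
  shows "fail_prob d m (Suc t) A \<le> fail_prob d m t A"
proof -
  have "(\<Sum>y\<in>grid d m. fail_prob d m t (insert y A)) \<le> (\<Sum>y\<in>grid d m. fail_prob d m t A)"
    by (rule sum_mono) (rule fail_prob_insert_le[OF assms(2)])
  then show ?thesis
    using finite_grid grid_nonempty[OF assms(1)]
    by (simp add: fail_prob_Suc[OF assms(1)] divide_le_eq card_gt_0_iff mult.commute)
qed

lemma fail_prob_antimono:
  assumes "d \<ge> 1" "finite A" "k \<le> n"
  shows "fail_prob d m n A \<le> fail_prob d m k A"
  using assms(3)
proof (induction n rule: dec_induct)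
  case (step n)
  then show ?case using fail_prob_Suc_le[OF assms(1,2), of m n] by linarith
qed simp

text \<open>While the rank is \<open>k < D\<close>, a fresh sample raises it with probability at least
  \<open>1 - exp (-(D - k) / d)\<close> (lemma \<open>card_DAff_le\<close> below), so this coupon-collector sum bounds
  the expected number of further samples needed from rank \<open>r\<close>.\<close>
definition hitting_bound :: "nat \<Rightarrow> nat \<Rightarrow> nat \<Rightarrow> real" where
  "hitting_bound d m r =
    (\<Sum>k\<in>{r..<max_rank d m}. 1 / (1 - exp (- real (max_rank d m - k) / real d)))"

lemma exp_neg_div_lt_1:
  assumes "n > 0" "d \<ge> 1"
  shows "exp (- real n / real d) < 1"
proof -
  have "real n / real d > 0"
    using assms by simp
  then show ?thesis
    by simp
qed

lemma hitting_bound_nonneg: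
  assumes "d \<ge> 1"
  shows "hitting_bound d m r \<ge> 0"
  unfolding hitting_bound_def
proof (rule sum_nonneg)
  fix k assume "k \<in> {r..<max_rank d m}"
  then have "exp (- real (max_rank d m - k) / real d) < 1"
    using assms by (intro exp_neg_div_lt_1) auto
  then show "0 \<le> 1 / (1 - exp (- real (max_rank d m - k) / real d))"
    by (subst zero_le_divide_1_iff) linarith
qed

lemma hitting_bound_step:
  assumes "r < max_rank d m"
  shows "hitting_bound d m r
    = 1 / (1 - exp (- real (max_rank d m - r) / real d)) + hitting_bound d m (Suc r)"
  unfolding hitting_bound_def using assms by (simp add: sum.atLeast_Suc_lessThan)

lemma expected_wait_step:
  fixes \<theta> e q :: real
  assumes "0 \<le> \<theta>" "\<theta> \<le> e" "e < 1"
  shows "1 + \<theta> * (1 / (1 - e) + q) + (1 - \<theta>) * q \<le> 1 / (1 - e) + q"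
proof -
  have "1 + \<theta> / (1 - e) \<le> 1 + e / (1 - e)"
    using assms by (intro add_left_mono divide_right_mono) auto
  also have "\<dots> = 1 / (1 - e)"
    using assms(3) by (simp add: field_simps)
  finally show ?thesis
    by (simp add: algebra_simps)
qed

lemma card_DAff_le:
  assumes "d \<ge> 1" "finite A" "A \<subseteq> grid d m"
  shows "real (card (DAff d m A))
    \<le> real d ^ m * exp (- real (max_rank d m - affine_rank d m A) / real d)"
proof (cases "DAff d m A = {}")
  case False
  have "real (card (DAff d m A))
      \<le> real d ^ m * exp (- (real (max_rank d m) - real (affine_rank d m (DAff d m A))) / real d)"
    by (rule card_le_exp_affine_rank[OF assms(1) DAff_subset_grid False])
  also have "\<dots> \<le> real d ^ m * exp (- real (max_rank d m - affine_rank d m A) / real d)"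
    using affine_rank_DAff_le[OF assms(2), of d m] affine_rank_le_max_rank[OF assms(3)] assms(1)
    by (auto simp: of_nat_diff intro!: divide_right_mono)
  finally show ?thesis .
qed simp

lemma sum_hitting_bound_insert:
  assumes "finite A"
  shows "(\<Sum>y\<in>grid d m. hitting_bound d m (affine_rank d m (insert y A)))
    = real (card (DAff d m A)) * hitting_bound d m (affine_rank d m A)
      + (real (card (grid d m)) - real (card (DAff d m A))) * hitting_bound d m (Suc (affine_rank d m A))"
proof -
  define G H r where "G = grid d m" and "H = DAff d m A" and "r = affine_rank d m A"
  have "finite G" "H \<subseteq> G"
    using finite_grid DAff_subset_grid by (auto simp: G_def H_def)
  have rank_insert: "affine_rank d m (insert y A) = (if y \<in> H then r else Suc r)" if "y \<in> G" for y
    using affine_rank_insert[OF assms] that by (simp add: G_def H_def r_def)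
  have "(\<Sum>y\<in>G. hitting_bound d m (affine_rank d m (insert y A)))
      = (\<Sum>y\<in>G - H. hitting_bound d m (affine_rank d m (insert y A)))
        + (\<Sum>y\<in>H. hitting_bound d m (affine_rank d m (insert y A)))"
    by (rule sum.subset_diff[OF \<open>H \<subseteq> G\<close> \<open>finite G\<close>])
  also have "(\<Sum>y\<in>G - H. hitting_bound d m (affine_rank d m (insert y A)))
      = (\<Sum>y\<in>G - H. hitting_bound d m (Suc r))"
    by (rule sum.cong) (simp_all add: rank_insert)
  also have "(\<Sum>y\<in>H. hitting_bound d m (affine_rank d m (insert y A))) = (\<Sum>y\<in>H. hitting_bound d m r)"
    by (rule sum.cong) (use \<open>H \<subseteq> G\<close> in \<open>auto simp: rank_insert\<close>)
  also have "(\<Sum>y\<in>G - H. hitting_bound d m (Suc r)) + (\<Sum>y\<in>H. hitting_bound d m r)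
      = real (card H) * hitting_bound d m r + (real (card G) - real (card H)) * hitting_bound d m (Suc r)"
    using card_Diff_subset[OF finite_subset[OF \<open>H \<subseteq> G\<close> \<open>finite G\<close>] \<open>H \<subseteq> G\<close>]
      card_mono[OF \<open>finite G\<close> \<open>H \<subseteq> G\<close>] by (simp add: of_nat_diff)
  finally show ?thesis
    unfolding G_def H_def r_def .
qed

lemma mean_hitting_bound_insert_le:
  assumes "d \<ge> 1" "finite A" "A \<subseteq> grid d m" "DAff d m A \<noteq> grid d m"
  shows "1 + (\<Sum>y\<in>grid d m. hitting_bound d m (affine_rank d m (insert y A))) / real (card (grid d m))
    \<le> hitting_bound d m (affine_rank d m A)"
proof -
  define r N \<theta> where "r = affine_rank d m A" and "N = real (card (grid d m))"
    and "\<theta> = real (card (DAff d m A)) / N"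
  define e where "e = exp (- real (max_rank d m - r) / real d)"
  have "N > 0"
    using finite_grid grid_nonempty[OF assms(1)] by (simp add: N_def card_gt_0_iff)
  obtain z where z: "z \<in> grid d m" "z \<notin> DAff d m A"
    using assms(4) DAff_subset_grid by blast
  have "Suc r \<le> max_rank d m"
    using affine_rank_insert[OF assms(2) z(1)] z(2) affine_rank_le_max_rank[of "insert z A" d m]
      assms(3) z(1) by (simp add: r_def)
  then have r: "r < max_rank d m" by simp
  then have "e < 1"
    unfolding e_def using assms(1) by (intro exp_neg_div_lt_1) auto
  have "\<theta> \<le> e"
    using card_DAff_le[OF assms(1-3)] \<open>N > 0\<close>
    by (simp add: \<theta>_def N_def e_def r_def card_grid divide_le_eq mult.commute)
  have step: "hitting_bound d m r = 1 / (1 - e) + hitting_bound d m (Suc r)"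
    unfolding e_def by (rule hitting_bound_step[OF r])
  have "1 + (\<Sum>y\<in>grid d m. hitting_bound d m (affine_rank d m (insert y A))) / N
      = 1 + \<theta> * (1 / (1 - e) + hitting_bound d m (Suc r)) + (1 - \<theta>) * hitting_bound d m (Suc r)"
    unfolding sum_hitting_bound_insert[OF assms(2)] step[symmetric] using \<open>N > 0\<close>
    by (simp add: \<theta>_def N_def r_def field_simps)
  also have "\<dots> \<le> 1 / (1 - e) + hitting_bound d m (Suc r)"
    by (rule expected_wait_step) (use \<open>\<theta> \<le> e\<close> \<open>e < 1\<close> \<open>N > 0\<close> in \<open>auto simp: \<theta>_def\<close>)
  also have "\<dots> = hitting_bound d m r"
    by (rule step[symmetric])
  finally show ?thesis
    unfolding N_def r_def .
qed

lemma sum_fail_prob_le_hitting_bound: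
  assumes "d \<ge> 1" "finite A" "A \<subseteq> grid d m"
  shows "(\<Sum>t<n. fail_prob d m t A) \<le> hitting_bound d m (affine_rank d m A)"
  using assms(2,3)
proof (induction n arbitrary: A)
  case 0
  show ?case using hitting_bound_nonneg[OF assms(1)] by simp
next
  case (Suc n)
  show ?case
  proof (cases "DAff d m A = grid d m")
    case True
    then show ?thesis
      using fail_prob_eq_0[OF Suc.prems(1)] hitting_bound_nonneg[OF assms(1)] by simp
  next
    case False
    have "(\<Sum>t<Suc n. fail_prob d m t A) = 1 + (\<Sum>t<n. fail_prob d m (Suc t) A)"
      unfolding sum.lessThan_Suc_shift fail_prob_0 using False by simp
    also have "\<dots> = 1 + (\<Sum>y\<in>grid d m. \<Sum>t<n. fail_prob d m t (insert y A)) / real (card (grid d m))"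
      by (simp add: fail_prob_Suc[OF assms(1)] sum_divide_distrib[symmetric] sum.swap[of _ "grid d m"])
    also have "\<dots> \<le> 1 + (\<Sum>y\<in>grid d m. hitting_bound d m (affine_rank d m (insert y A)))
        / real (card (grid d m))"
      using Suc.IH Suc.prems by (intro add_left_mono divide_right_mono sum_mono) auto
    also have "\<dots> \<le> hitting_bound d m (affine_rank d m A)"
      by (rule mean_hitting_bound_insert_le[OF assms(1) Suc.prems False])
    finally show ?thesis .
  qed
qed

lemma inverse_one_minus_exp_neg_le:
  fixes x :: real
  assumes "x > 0"
  shows "1 / (1 - exp (- x)) \<le> 1 + 1 / x"
proof -
  have "x \<le> exp x - 1"
    using exp_ge_add_one_self[of x] by linarith
  then have "1 / (exp x - 1) \<le> 1 / x"
    using assms by (intro divide_left_mono) auto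
  moreover have "1 / (1 - exp (- x)) = 1 + 1 / (exp x - 1)"
    using \<open>x \<le> exp x - 1\<close> assms by (simp add: exp_minus field_simps)
  ultimately show ?thesis by simp
qed

lemma sum_inverse_diff_eq_harm: "(\<Sum>k<n. 1 / real (n - k)) = (harm n :: real)"
proof -
  have "(\<Sum>k<n. 1 / real (n - k)) = (\<Sum>k<n. inverse (real (Suc (n - Suc k))))"
    by (intro sum.cong) (auto simp: Suc_diff_Suc divide_inverse)
  also have "\<dots> = (\<Sum>k<n. inverse (real (Suc k)))"
    by (rule sum.nat_diff_reindex[where g = "\<lambda>k. inverse (real (Suc k))"])
  finally show ?thesis
    by (simp add: harm_altdef)
qed

lemma harm_le_one_plus_ln:
  assumes "n \<ge> 1"
  shows "(harm n :: real) \<le> 1 + ln (real n)"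
proof -
  have "harm n - ln (real n) \<le> harm 1 - ln (real 1)"
    using euler_mascheroni_sequence_decreasing[of 1 n] assms by simp
  moreover have "harm 1 = (1 :: real)"
    by (simp add: harm_altdef)
  ultimately show ?thesis by simp
qed

lemma real_max_rank_le:
  assumes "d \<ge> 1"
  shows "real (max_rank d m) \<le> (real m + 1) * real d"
proof -
  have "m * (d - 1) \<le> m * d"
    by (simp add: mult_le_mono2)
  then have "max_rank d m \<le> m * d + d"
    using assms unfolding max_rank_def by linarith
  then have "real (max_rank d m) \<le> real (m * d + d)"
    by (simp only: of_nat_le_iff)
  also have "\<dots> = (real m + 1) * real d"
    by (simp add: distrib_right)
  finally show ?thesis .
qed

lemma ln_max_rank_le:
  assumes "d \<ge> 1"
  shows "ln (real (max_rank d m)) \<le> real m + ln (real d)"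
proof -
  have "max_rank d m > 0"
    by (simp add: max_rank_def)
  then have "ln (real (max_rank d m)) \<le> ln ((real m + 1) * real d)"
    using real_max_rank_le[OF assms, of m] assms by (subst ln_le_cancel_iff) simp_all
  also have "\<dots> = ln (real m + 1) + ln (real d)"
    using assms by (simp add: ln_mult)
  also have "ln (real m + 1) \<le> real m"
    using ln_le_minus_one[of "real m + 1"] by simp
  finally show ?thesis by simp
qed

lemma hitting_bound_0_le_harm:
  assumes "d \<ge> 1"
  shows "hitting_bound d m 0 \<le> real (max_rank d m) + real d * harm (max_rank d m)"
proof -
  define D where "D = max_rank d m"
  have "hitting_bound d m 0 = (\<Sum>k<D. 1 / (1 - exp (- real (D - k) / real d)))"
    unfolding hitting_bound_def D_def atLeast0LessThan ..
  also have "\<dots> \<le> (\<Sum>k<D. 1 + real d / real (D - k))"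
  proof (rule sum_mono)
    fix k assume "k \<in> {..<D}"
    then have "real (D - k) / real d > 0"
      using assms by simp
    from inverse_one_minus_exp_neg_le[OF this]
    show "1 / (1 - exp (- real (D - k) / real d)) \<le> 1 + real d / real (D - k)"
      by simp
  qed
  also have "\<dots> = real D + real d * (\<Sum>k<D. 1 / real (D - k))"
    by (simp add: sum.distrib sum_distrib_left)
  also have "\<dots> = real D + real d * harm D"
    by (simp only: sum_inverse_diff_eq_harm)
  finally show ?thesis
    unfolding D_def .
qed

lemma hitting_bound_0_le:
  assumes "d \<ge> 1"
  shows "hitting_bound d m 0 \<le> 2 * real d * (real m + 1 + ln (real d))"
proof -
  define D where "D = max_rank d m"
  have "D \<ge> 1"
    by (simp add: D_def max_rank_def)
  have "hitting_bound d m 0 \<le> real D + real d * harm D"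
    unfolding D_def by (rule hitting_bound_0_le_harm[OF assms])
  also have "\<dots> \<le> real D + real d * (1 + ln (real D))"
    using harm_le_one_plus_ln[OF \<open>D \<ge> 1\<close>] by (intro add_left_mono mult_left_mono) simp_all
  also have "\<dots> \<le> (real m + 1) * real d + real d * (real m + 1 + ln (real d))"
  proof (rule add_mono)
    show "real D \<le> (real m + 1) * real d"
      unfolding D_def by (rule real_max_rank_le[OF assms])
    show "real d * (1 + ln (real D)) \<le> real d * (real m + 1 + ln (real d))"
      using ln_max_rank_le[OF assms, of m] unfolding D_def by (intro mult_left_mono) simp_all
  qed
  also have "\<dots> \<le> 2 * real d * (real m + 1 + ln (real d))"
    using assms by (simp add: algebra_simps)
  finally show ?thesis .
qed

lemma mult_fail_prob_le_sum:
  assumes "d \<ge> 1" "finite A"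
  shows "real n * fail_prob d m n A \<le> (\<Sum>t<n. fail_prob d m t A)"
  using sum_mono[of "{..<n}" "\<lambda>_. fail_prob d m n A" "\<lambda>t. fail_prob d m t A"]
    fail_prob_antimono[OF assms] by simp

lemma prob_DAff_eq_grid:
  "measure_pmf.prob (samples d m n) {f. DAff d m (f ` {..<n}) = grid d m} = 1 - fail_prob d m n {}"
proof -
  have eq: "{f. DAff d m (f ` {..<n}) = grid d m}
      = space (measure_pmf (samples d m n)) - {f. DAff d m ({} \<union> f ` {..<n}) \<noteq> grid d m}"
    by auto
  show ?thesis
    unfolding eq fail_prob_def by (rule measure_pmf.prob_compl) simp
qed

theorem theorem7:
  fixes d m n :: nat and c :: real
  assumes "d \<ge> 1" and "c > 0"
    and "real n > 2 * c * real d * (real m + 1 + ln (real d))"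
  shows "measure_pmf.prob (samples d m n)
           {f. DAff d m (f ` {..<n}) = grid d m} \<ge> 1 - 1 / c"
proof -
  have "0 < 2 * c * real d * (real m + 1 + ln (real d))"
    using assms(1,2) by (intro mult_pos_pos) (auto intro: add_pos_nonneg)
  then have "real n > 0"
    using assms(3) by linarith
  have "affine_rank d m {} = 0"
    unfolding affine_rank_def by (simp add: V.dim_eq_card_independent[OF V.independent_empty])
  then have "real n * fail_prob d m n {} \<le> hitting_bound d m 0"
    using mult_fail_prob_le_sum[OF assms(1), of "{}" n m] sum_fail_prob_le_hitting_bound[OF assms(1), of "{}" m n]
    by simp
  also have "\<dots> \<le> 2 * real d * (real m + 1 + ln (real d))"
    by (rule hitting_bound_0_le[OF assms(1)])
  also have "\<dots> < real n * (1 / c)"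
    using assms(2,3) by (simp add: field_simps)
  finally have "real n * fail_prob d m n {} < real n * (1 / c)" .
  then have "fail_prob d m n {} < 1 / c"
    by (simp only: mult_less_cancel_left_pos[OF \<open>real n > 0\<close>])
  then show ?thesis
    by (simp add: prob_DAff_eq_grid)
qed

end
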